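(* Let $\gamma>1$ be a constant. There exists a constant $C>0$ such that, for all sufficiently large $n$ and any $p\ge\gamma\log n/(n-1)$, with probability at least $1-n^{-C}$ the following holds in $\mathcal G(n,p)$: for every $S\subsetneq[n]$ with $2\le|S|\le n-2$, $|E(S,[n]\setminus S)|\ge1.5\,\delta$, where $\delta$ is the minimum degree of $\mathcal G(n,p)$.
   Context: $\mathcal G(n,p)$ is the Erdős–Rényi random graph on $[n]$ with edge probability $p$; $E(S,S')$ is the set of edges with one end in $S$ and the other in $S'$. *)

theory Defs
  imports Complex_Main
begin

text \<open>Vertex set [n] = {1..n}. A graph on [n] is a set of edges, each edge a
  2-element subset of [n].\<close>

definition all_edges :: "nat \<Rightarrow> nat set set" where
  "all_edges n = {e. \<exists>u v. u \<in> {1..n} \<and> v \<in> {1..n} \<and> u \<noteq> v \<and> e = {u, v}}"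

definition gnp_prob :: "nat \<Rightarrow> real \<Rightarrow> (nat set set \<Rightarrow> bool) \<Rightarrow> real" where
  "gnp_prob n p P =
     (\<Sum>E \<in> {E. E \<subseteq> all_edges n \<and> P E}.
        p ^ card E * (1 - p) ^ (card (all_edges n) - card E))"

definition degree :: "nat set set \<Rightarrow> nat \<Rightarrow> nat" where
  "degree E v = card {u. {u, v} \<in> E}"

definition min_degree :: "nat \<Rightarrow> nat set set \<Rightarrow> nat" where
  "min_degree n E = Min (degree E ` {1..n})"

definition cut_edges :: "nat set set \<Rightarrow> nat set \<Rightarrow> nat set \<Rightarrow> nat set set" where
  "cut_edges E S S' = {e \<in> E. \<exists>u \<in> S. \<exists>v \<in> S'. e = {u, v}}"

end

theory Submission
  imports Defs "HOL-Real_Asymp.Real_Asymp"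
begin

text \<open>Let \<open>D = (n - 1) p \<ge> \<gamma> ln n\<close> be the expected degree. With high probability every degree
  exceeds \<open>\<epsilon> D\<close>, vertex \<open>1\<close> has degree at most \<open>9 D\<close>, no set of \<open>k \<le> c n\<close> vertices spans more
  than \<open>k \<epsilon> D / 8\<close> edges, and every cut whose sides both have more than \<open>c n\<close> vertices carries
  more than \<open>14 D\<close> edges. On this event, for a side \<open>S\<close> of at most \<open>c n\<close> vertices the degree
  sum gives \<open>|S| \<delta> \<le> e(S, S\<^sup>c) + 2 e(S) \<le> e(S, S\<^sup>c) + |S| \<delta> / 4\<close>, hence
  \<open>e(S, S\<^sup>c) \<ge> 3 |S| \<delta> / 4 \<ge> 1.5 \<delta>\<close>; a side with small complement is treated through the
  complement, and all remaining cuts have more than \<open>14 D \<ge> 1.5 \<cdot> 9 D \<ge> 1.5 \<delta>\<close> edges.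
  The exceptional events are bounded by union bounds over binomial tails. All but the
  low-degree event have probability \<open>O(1/n)\<close>; the low-degree event has probability about
  \<open>n e\<^sup>-\<^sup>D \<le> n\<^sup>1\<^sup>-\<^sup>\<gamma>\<close> up to the slack in \<open>\<epsilon>\<close>, which is where \<open>\<gamma> > 1\<close> is needed.\<close>

section \<open>Edge-set probabilities in \<open>G(n, p)\<close>\<close>

lemma sum_Pow_binomial:
  fixes p q :: "'b::comm_semiring_1"
  assumes "finite X"
  shows "(\<Sum>B\<in>Pow X. p ^ card B * q ^ (card X - card B)) = (p + q) ^ card X"
  using assms
proof (induction X rule: finite_induct)
  case empty
  then show ?case by simp
next
  case (insert x X)
  have disj: "Pow X \<inter> insert x ` Pow X = {}"
    using insert by auto
  have inj: "inj_on (insert x) (Pow X)"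
    using insert by (auto intro!: inj_onI simp: insert_ident subset_iff)
  have card_insert: "card (insert x B) = Suc (card B)" "card B \<le> card X" if "B \<in> Pow X" for B
    using insert that by (auto simp: card_insert_if finite_subset card_mono subset_iff)
  have "(\<Sum>B\<in>Pow (insert x X). p ^ card B * q ^ (card (insert x X) - card B))
      = (\<Sum>B\<in>Pow X. p ^ card B * q ^ (Suc (card X) - card B))
        + (\<Sum>B\<in>insert x ` Pow X. p ^ card B * q ^ (Suc (card X) - card B))"
    using insert disj by (simp add: Pow_insert sum.union_disjoint)
  also have "(\<Sum>B\<in>insert x ` Pow X. p ^ card B * q ^ (Suc (card X) - card B))
      = p * (\<Sum>B\<in>Pow X. p ^ card B * q ^ (card X - card B))"
    by (simp add: sum.reindex[OF inj] card_insert sum_distrib_left mult.assoc)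
  also have "(\<Sum>B\<in>Pow X. p ^ card B * q ^ (Suc (card X) - card B))
      = q * (\<Sum>B\<in>Pow X. p ^ card B * q ^ (card X - card B))"
    by (auto simp: sum_distrib_left card_insert Suc_diff_le ac_simps intro!: sum.cong)
  finally show ?case
    using insert by (simp add: algebra_simps)
qed

text \<open>The part of \<open>E\<close> outside \<open>F\<close> is summed out by the binomial theorem.\<close>

lemma sum_weighted_subsets_restrict:
  fixes p q :: "'b::comm_semiring_1"
  assumes "finite M" "F \<subseteq> M"
  shows "(\<Sum>E\<in>{E. E \<subseteq> M \<and> P (E \<inter> F)}. p ^ card E * q ^ (card M - card E))
        = (p + q) ^ (card M - card F) * (\<Sum>A\<in>{A. A \<subseteq> F \<and> P A}. p ^ card A * q ^ (card F - card A))"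
proof -
  have fin: "finite F" "finite (M - F)"
    using assms finite_subset by auto
  have card_M: "card M = card F + card (M - F)"
    using assms fin by (metis card_Diff_subset card_mono le_add_diff_inverse)
  let ?g = "\<lambda>(A, B). A \<union> (B :: 'a set)"
  let ?I = "{A. A \<subseteq> F \<and> P A} \<times> Pow (M - F)"
  have split: "{E. E \<subseteq> M \<and> P (E \<inter> F)} = ?g ` ?I"
  proof (intro set_eqI iffI)
    fix E assume "E \<in> {E. E \<subseteq> M \<and> P (E \<inter> F)}"
    then have "E = ?g (E \<inter> F, E - F)" "(E \<inter> F, E - F) \<in> ?I" by auto
    then show "E \<in> ?g ` ?I" by blast
  next
    fix E assume "E \<in> ?g ` ?I"
    then obtain A B where "A \<subseteq> F" "P A" "B \<subseteq> M - F" "E = A \<union> B" by auto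
    moreover have "(A \<union> B) \<inter> F = A"
      using \<open>A \<subseteq> F\<close> \<open>B \<subseteq> M - F\<close> by auto
    ultimately show "E \<in> {E. E \<subseteq> M \<and> P (E \<inter> F)}"
      using assms by auto
  qed
  have inj: "inj_on ?g ?I"
  proof (rule inj_onI, clarify)
    fix A B A' B' assume "A \<subseteq> F" "B \<subseteq> M - F" "A' \<subseteq> F" "B' \<subseteq> M - F" "A \<union> B = A' \<union> B'"
    then show "A = A' \<and> B = B'" by blast
  qed
  have weight: "p ^ card (A \<union> B) * q ^ (card M - card (A \<union> B))
      = (p ^ card A * q ^ (card F - card A)) * (p ^ card B * q ^ (card (M - F) - card B))"
    if "A \<subseteq> F" "B \<subseteq> M - F" for A B
  proof -
    have "card (A \<union> B) = card A + card B"
      using that fin by (subst card_Un_disjoint) (auto intro: finite_subset)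
    moreover have "card A \<le> card F" "card B \<le> card (M - F)"
      using that fin by (auto intro: card_mono)
    ultimately have "card M - card (A \<union> B) = (card F - card A) + (card (M - F) - card B)"
      using card_M by linarith
    with \<open>card (A \<union> B) = card A + card B\<close> show ?thesis
      by (simp add: power_add algebra_simps)
  qed
  have "(\<Sum>E\<in>{E. E \<subseteq> M \<and> P (E \<inter> F)}. p ^ card E * q ^ (card M - card E))
      = (\<Sum>(A, B)\<in>?I. (p ^ card A * q ^ (card F - card A)) * (p ^ card B * q ^ (card (M - F) - card B)))"
    unfolding split by (subst sum.reindex[OF inj]) (auto intro!: sum.cong simp: weight)
  also have "\<dots> = (\<Sum>A\<in>{A. A \<subseteq> F \<and> P A}. p ^ card A * q ^ (card F - card A))
      * (\<Sum>B\<in>Pow (M - F). p ^ card B * q ^ (card (M - F) - card B))"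
    by (simp add: sum_product sum.cartesian_product case_prod_unfold)
  also have "(\<Sum>B\<in>Pow (M - F). p ^ card B * q ^ (card (M - F) - card B)) = (p + q) ^ (card M - card F)"
    using sum_Pow_binomial[OF fin(2)] card_M by simp
  finally show ?thesis
    by (simp add: mult.commute)
qed

lemma finite_all_edges: "finite (all_edges n)"
  by (rule finite_subset[of _ "Pow {1..n}"]) (auto simp: all_edges_def)

lemma gnp_prob_eq_sum_Pow:
  "gnp_prob n p P = (\<Sum>E\<in>Pow (all_edges n).
     if P E then p ^ card E * (1 - p) ^ (card (all_edges n) - card E) else 0)"
  unfolding gnp_prob_def
  by (subst sum.inter_filter[symmetric]) (auto simp: finite_all_edges intro!: sum.cong)

lemma gnp_prob_restrict:
  assumes "F \<subseteq> all_edges n"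
  shows "gnp_prob n p (\<lambda>E. P (E \<inter> F))
       = (\<Sum>A\<in>{A. A \<subseteq> F \<and> P A}. p ^ card A * (1 - p) ^ (card F - card A))"
  unfolding gnp_prob_def
  using sum_weighted_subsets_restrict[OF finite_all_edges assms, where P = P and p = p and q = "1 - p"]
  by simp

lemma gnp_prob_cong:
  "(\<And>E. E \<subseteq> all_edges n \<Longrightarrow> P E \<longleftrightarrow> Q E) \<Longrightarrow> gnp_prob n p P = gnp_prob n p Q"
  unfolding gnp_prob_def by (rule sum.cong) auto

lemma gnp_prob_not: "gnp_prob n p (\<lambda>E. \<not> P E) = 1 - gnp_prob n p P"
proof -
  have "gnp_prob n p (\<lambda>E. \<not> P E) + gnp_prob n p P = gnp_prob n p (\<lambda>E. True)"
    unfolding gnp_prob_eq_sum_Pow by (subst sum.distrib[symmetric]) (auto intro!: sum.cong)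
  also have "\<dots> = 1"
    using gnp_prob_restrict[of "{}" n p "\<lambda>_. True"] by simp
  finally show ?thesis by simp
qed

lemma gnp_prob_mono:
  assumes "0 \<le> p" "p \<le> 1" "\<And>E. E \<subseteq> all_edges n \<Longrightarrow> P E \<Longrightarrow> Q E"
  shows "gnp_prob n p P \<le> gnp_prob n p Q"
  unfolding gnp_prob_eq_sum_Pow using assms by (intro sum_mono) auto

lemma gnp_prob_Bex_le:
  assumes "0 \<le> p" "p \<le> 1" "finite I"
  shows "gnp_prob n p (\<lambda>E. \<exists>i\<in>I. P i E) \<le> (\<Sum>i\<in>I. gnp_prob n p (P i))"
proof -
  let ?w = "\<lambda>E. p ^ card E * (1 - p) ^ (card (all_edges n) - card E)"
  have "(if \<exists>i\<in>I. P i E then ?w E else 0) \<le> (\<Sum>i\<in>I. if P i E then ?w E else 0)" for E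
  proof (cases "\<exists>i\<in>I. P i E")
    case True
    then obtain i where "i \<in> I" "P i E" by blast
    then have "(if P i E then ?w E else 0) \<le> (\<Sum>i\<in>I. if P i E then ?w E else 0)"
      using assms by (intro member_le_sum) auto
    with True \<open>P i E\<close> show ?thesis by simp
  qed (use assms in \<open>simp add: sum_nonneg\<close>)
  then have "gnp_prob n p (\<lambda>E. \<exists>i\<in>I. P i E)
      \<le> (\<Sum>E\<in>Pow (all_edges n). \<Sum>i\<in>I. if P i E then ?w E else 0)"
    unfolding gnp_prob_eq_sum_Pow by (rule sum_mono)
  also have "\<dots> = (\<Sum>i\<in>I. gnp_prob n p (P i))"
    unfolding gnp_prob_eq_sum_Pow by (rule sum.swap)
  finally show ?thesis .
qed

lemma gnp_prob_disj_le:
  assumes "0 \<le> p" "p \<le> 1"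
  shows "gnp_prob n p (\<lambda>E. P E \<or> Q E) \<le> gnp_prob n p P + gnp_prob n p Q"
proof -
  have "gnp_prob n p (\<lambda>E. P E \<or> Q E) \<le> gnp_prob n p P + gnp_prob n p (\<lambda>E. Q E \<and> \<not> P E)"
    unfolding gnp_prob_eq_sum_Pow by (subst sum.distrib[symmetric]) (auto intro!: sum_mono)
  also have "gnp_prob n p (\<lambda>E. Q E \<and> \<not> P E) \<le> gnp_prob n p Q"
    using assms by (intro gnp_prob_mono) auto
  finally show ?thesis by simp
qed

lemma gnp_prob_superset:
  assumes "T \<subseteq> all_edges n"
  shows "gnp_prob n p (\<lambda>E. T \<subseteq> E) = p ^ card T"
proof -
  have "gnp_prob n p (\<lambda>E. T \<subseteq> E) = gnp_prob n p (\<lambda>E. T \<subseteq> E \<inter> T)"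
    by (rule gnp_prob_cong) auto
  also have "\<dots> = (\<Sum>A\<in>{A. A \<subseteq> T \<and> T \<subseteq> A}. p ^ card A * (1 - p) ^ (card T - card A))"
    by (rule gnp_prob_restrict[OF assms])
  also have "{A. A \<subseteq> T \<and> T \<subseteq> A} = {T}" by auto
  finally show ?thesis by simp
qed

lemma gnp_prob_card_ge_le:
  assumes "0 \<le> p" "p \<le> 1" "F \<subseteq> all_edges n"
  shows "gnp_prob n p (\<lambda>E. t \<le> card (E \<inter> F)) \<le> real (card F choose t) * p ^ t"
proof -
  have fin: "finite F"
    using assms finite_all_edges finite_subset by blast
  let ?I = "{T. T \<subseteq> F \<and> card T = t}"
  have "gnp_prob n p (\<lambda>E. t \<le> card (E \<inter> F)) \<le> gnp_prob n p (\<lambda>E. \<exists>T\<in>?I. T \<subseteq> E)"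
  proof (rule gnp_prob_mono[OF assms(1,2)])
    fix E assume "t \<le> card (E \<inter> F)"
    then obtain T where "T \<subseteq> E \<inter> F" "card T = t"
      by (meson obtain_subset_with_card_n)
    then show "\<exists>T\<in>?I. T \<subseteq> E" by auto
  qed
  also have "\<dots> \<le> (\<Sum>T\<in>?I. gnp_prob n p (\<lambda>E. T \<subseteq> E))"
    using fin assms by (intro gnp_prob_Bex_le) auto
  also have "\<dots> = (\<Sum>T\<in>?I. p ^ t)"
    using assms(3) by (intro sum.cong) (auto simp: gnp_prob_superset)
  also have "\<dots> = real (card F choose t) * p ^ t"
    using n_subsets[OF fin] by simp
  finally show ?thesis .
qed

lemma gnp_prob_card_le:
  assumes "F \<subseteq> all_edges n"
  shows "gnp_prob n p (\<lambda>E. card (E \<inter> F) \<le> s)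
       = (\<Sum>j\<le>s. real (card F choose j) * p ^ j * (1 - p) ^ (card F - j))"
proof -
  have fin: "finite F"
    using assms finite_all_edges finite_subset by blast
  have "gnp_prob n p (\<lambda>E. card (E \<inter> F) \<le> s)
      = (\<Sum>A\<in>(\<Union>j\<le>s. {A. A \<subseteq> F \<and> card A = j}). p ^ card A * (1 - p) ^ (card F - card A))"
    unfolding gnp_prob_restrict[OF assms, where P = "\<lambda>A. card A \<le> s"] by (rule sum.cong) auto
  also have "\<dots> = (\<Sum>j\<le>s. \<Sum>A\<in>{A. A \<subseteq> F \<and> card A = j}. p ^ j * (1 - p) ^ (card F - j))"
    using fin by (subst sum.UNION_disjoint) (auto intro!: sum.cong)
  also have "\<dots> = (\<Sum>j\<le>s. real (card F choose j) * p ^ j * (1 - p) ^ (card F - j))"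
    using n_subsets[OF fin] by (simp add: mult.assoc)
  finally show ?thesis .
qed

section \<open>Binomial tail estimates\<close>

lemma power_div_fact_le_exp:
  fixes x :: real
  assumes "0 \<le> x"
  shows "x ^ k / fact k \<le> exp x"
proof -
  have "x ^ k / fact k \<le> (\<Sum>i\<le>k. x ^ i / fact i)"
    using assms by (intro member_le_sum) auto
  also have "\<dots> \<le> exp x"
    using assms summable_exp_generic[of x]
    by (auto simp: exp_def divide_inverse ac_simps intro!: sum_le_suminf)
  finally show ?thesis .
qed

lemma binomial_le_power_div_fact: "real (m choose t) \<le> real m ^ t / fact t"
proof -
  have "real (m choose t) * fact t \<le> real m ^ t"
    using binomial_fact_pow[of m t] by (metis of_nat_fact of_nat_le_iff of_nat_mult of_nat_power)
  then show ?thesis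
    by (simp add: field_simps)
qed

lemma binomial_mult_power_le:
  fixes p :: real
  assumes "0 \<le> p" "1 \<le> t"
  shows "real (m choose t) * p ^ t \<le> (exp 1 * real m * p / real t) ^ t"
proof -
  have "real (m choose t) * p ^ t \<le> real m ^ t / fact t * p ^ t"
    using assms binomial_le_power_div_fact by (intro mult_right_mono) auto
  also have "\<dots> = (real m * p) ^ t / fact t"
    by (simp add: power_mult_distrib)
  also have "\<dots> = (real m * p / real t) ^ t * (real t ^ t / fact t)"
    using assms by (simp add: power_divide)
  also have "\<dots> \<le> (real m * p / real t) ^ t * exp (real t)"
    using assms by (intro mult_left_mono power_div_fact_le_exp) auto
  also have "\<dots> = (exp 1 * real m * p / real t) ^ t"
    using exp_of_nat_mult[of t "1::real"] by (simp add: power_mult_distrib power_divide)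
  finally show ?thesis .
qed

lemma one_minus_power_diff_le_exp:
  fixes p :: real
  assumes "p \<le> 1" "j \<le> N"
  shows "(1 - p) ^ (N - j) \<le> exp (- p * real N + p * real j)"
proof -
  have "(1 - p) ^ (N - j) \<le> exp (- p) ^ (N - j)"
    using assms exp_minus_ge[of p] by (intro power_mono) auto
  also have "\<dots> = exp (- p * real N + p * real j)"
    using assms by (simp add: exp_of_nat_mult[symmetric] of_nat_diff algebra_simps)
  finally show ?thesis .
qed

text \<open>Each term is at most \<open>D\<^sup>j / j! \<cdot> e\<^sup>-\<^sup>D\<^sup>+\<^sup>\<epsilon>\<^sup>D\<close>, and \<open>D\<^sup>j / j! \<le> \<epsilon>\<^sup>-\<^sup>j e\<^sup>\<epsilon>\<^sup>D\<close> by the exponential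
  series applied to \<open>\<epsilon> D\<close>.\<close>

lemma binomial_lower_tail_le:
  fixes p \<epsilon> :: real and N :: nat
  assumes p: "0 \<le> p" "p \<le> 1" and \<epsilon>: "0 < \<epsilon>" "\<epsilon> \<le> 1"
  defines "D \<equiv> real N * p"
  shows "(\<Sum>j\<le>nat \<lfloor>\<epsilon> * D\<rfloor>. real (N choose j) * p ^ j * (1 - p) ^ (N - j))
         \<le> (D + 1) * exp (- D * (1 - \<epsilon> * (2 + ln (1 / \<epsilon>))))"
proof -
  let ?s = "nat \<lfloor>\<epsilon> * D\<rfloor>"
  let ?b = "exp (- D * (1 - \<epsilon> * (2 + ln (1 / \<epsilon>))))"
  have D: "0 \<le> D"
    using p by (simp add: D_def)
  have s: "real ?s \<le> \<epsilon> * D"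
    using D \<epsilon> by simp
  have term_le: "real (N choose j) * p ^ j * (1 - p) ^ (N - j) \<le> ?b" if "j \<le> ?s" for j
  proof (cases "j \<le> N")
    case False
    then show ?thesis by (simp add: binomial_eq_0)
  next
    case True
    have j: "real j \<le> \<epsilon> * D"
      using that s by linarith
    have "(1 - p) ^ (N - j) \<le> exp (- D + \<epsilon> * D)"
    proof -
      have "p * real j \<le> \<epsilon> * D"
        using j p by (meson mult_left_le_one_le of_nat_0_le_iff order.trans)
      then show ?thesis
        by (intro order.trans[OF one_minus_power_diff_le_exp[OF p(2) True]]) (simp add: D_def ac_simps)
    qed
    moreover have "D ^ j / fact j \<le> exp (\<epsilon> * D * ln (1 / \<epsilon>) + \<epsilon> * D)"
    proof -
      have "D ^ j / fact j = (1 / \<epsilon>) ^ j * ((\<epsilon> * D) ^ j / fact j)"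
        using \<epsilon> by (simp add: power_mult_distrib field_simps)
      also have "\<dots> \<le> (1 / \<epsilon>) ^ j * exp (\<epsilon> * D)"
        using \<epsilon> D by (intro mult_left_mono power_div_fact_le_exp) auto
      also have "\<dots> = exp (real j * ln (1 / \<epsilon>)) * exp (\<epsilon> * D)"
        using \<epsilon> by (simp add: exp_of_nat_mult)
      also have "\<dots> \<le> exp (\<epsilon> * D * ln (1 / \<epsilon>)) * exp (\<epsilon> * D)"
        using j \<epsilon> by (simp add: mult_right_mono)
      finally show ?thesis
        by (simp add: exp_add)
    qed
    moreover have "real (N choose j) * p ^ j \<le> real N ^ j / fact j * p ^ j"
      using p binomial_le_power_div_fact by (intro mult_right_mono) auto
    moreover have "real N ^ j / fact j * p ^ j = D ^ j / fact j"
      by (simp add: D_def power_mult_distrib)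
    ultimately have "real (N choose j) * p ^ j * (1 - p) ^ (N - j)
        \<le> exp (\<epsilon> * D * ln (1 / \<epsilon>) + \<epsilon> * D) * exp (- D + \<epsilon> * D)"
      using p by (intro mult_mono) (auto intro: order.trans)
    also have "\<dots> = ?b"
      by (simp add: exp_add[symmetric] algebra_simps)
    finally show ?thesis .
  qed
  have "(\<Sum>j\<le>?s. real (N choose j) * p ^ j * (1 - p) ^ (N - j)) \<le> (\<Sum>j\<le>?s. ?b)"
    by (intro sum_mono term_le) auto
  also have "\<dots> = (real ?s + 1) * ?b"
    by simp
  also have "\<dots> \<le> (D + 1) * ?b"
    using s mult_left_le_one_le[OF D \<epsilon>(1)[THEN less_imp_le] \<epsilon>(2)] by (intro mult_right_mono) auto
  finally show ?thesis .
qed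

lemma binomial_lower_tail_le_crude:
  fixes p :: real
  assumes p: "0 \<le> p" "p \<le> 1" and N: "1 \<le> N"
  shows "(\<Sum>j\<le>s. real (N choose j) * p ^ j * (1 - p) ^ (N - j))
         \<le> (real s + 1) * real N ^ s * exp (- p * real N + real s)"
proof -
  have term_le: "real (N choose j) * p ^ j * (1 - p) ^ (N - j) \<le> real N ^ s * exp (- p * real N + real s)"
    if "j \<le> s" for j
  proof (cases "j \<le> N")
    case False
    then show ?thesis by (simp add: binomial_eq_0)
  next
    case True
    have "real (N choose j) * p ^ j \<le> real N ^ s"
    proof -
      have "real (N choose j) * p ^ j \<le> real (N choose j)"
        using p by (simp add: mult_left_le power_le_one)
      also have "\<dots> \<le> real N ^ j"
        using binomial_le_pow[OF True] by (simp flip: of_nat_power)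
      also have "\<dots> \<le> real N ^ s"
        using N that by (intro power_increasing) auto
      finally show ?thesis .
    qed
    moreover have "(1 - p) ^ (N - j) \<le> exp (- p * real N + real s)"
    proof -
      have "p * real j \<le> real s"
        using that p by (metis mult_left_le_one_le of_nat_0_le_iff of_nat_mono order.trans)
      then show ?thesis
        by (intro order.trans[OF one_minus_power_diff_le_exp[OF p(2) True]]) simp
    qed
    ultimately show ?thesis
      using p by (intro mult_mono) auto
  qed
  have "(\<Sum>j\<le>s. real (N choose j) * p ^ j * (1 - p) ^ (N - j))
      \<le> (\<Sum>j\<le>s. real N ^ s * exp (- p * real N + real s))"
    by (intro sum_mono term_le) auto
  then show ?thesis
    by (simp add: ac_simps)
qed

section \<open>Degrees and cuts\<close>

definition edges_at :: "nat \<Rightarrow> nat \<Rightarrow> nat set set" where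
  "edges_at n v = (\<lambda>u. {u, v}) ` ({1..n} - {v})"

definition edges_across :: "nat \<Rightarrow> nat set \<Rightarrow> nat set set" where
  "edges_across n S = (\<lambda>(u, v). {u, v}) ` (S \<times> ({1..n} - S))"

definition edges_within :: "nat \<Rightarrow> nat set \<Rightarrow> nat set set" where
  "edges_within n S = {e \<in> all_edges n. e \<subseteq> S}"

lemma doubleton_in_all_edges_iff:
  "{u, v} \<in> all_edges n \<longleftrightarrow> u \<in> {1..n} \<and> v \<in> {1..n} \<and> u \<noteq> v"
  unfolding all_edges_def by (auto simp: doubleton_eq_iff)

lemma edges_at_subset: "v \<in> {1..n} \<Longrightarrow> edges_at n v \<subseteq> all_edges n"
  unfolding edges_at_def by (auto simp: doubleton_in_all_edges_iff)

lemma card_edges_at: "v \<in> {1..n} \<Longrightarrow> card (edges_at n v) = n - 1"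
  unfolding edges_at_def by (subst card_image) (auto intro!: inj_onI simp: doubleton_eq_iff)

lemma degree_eq_card_edges_at:
  assumes "E \<subseteq> all_edges n"
  shows "degree E v = card (E \<inter> edges_at n v)"
proof -
  have "E \<inter> edges_at n v = (\<lambda>u. {u, v}) ` {u. {u, v} \<in> E}"
    using assms unfolding edges_at_def by (auto simp: doubleton_in_all_edges_iff)
  moreover have "inj_on (\<lambda>u. {u, v}) {u. {u, v} \<in> E}"
    by (auto intro!: inj_onI simp: doubleton_eq_iff)
  ultimately show ?thesis
    unfolding degree_def by (simp add: card_image)
qed

lemma edges_across_subset: "S \<subseteq> {1..n} \<Longrightarrow> edges_across n S \<subseteq> all_edges n"
  unfolding edges_across_def by (auto simp: doubleton_in_all_edges_iff)

lemma card_edges_across: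
  assumes "S \<subseteq> {1..n}"
  shows "card (edges_across n S) = card S * (n - card S)"
proof -
  have "inj_on (\<lambda>(u, v). {u, v}) (S \<times> ({1..n} - S))"
    by (rule inj_onI) (auto simp: doubleton_eq_iff)
  moreover have "card ({1..n} - S) = n - card S"
    using assms by (simp add: card_Diff_subset finite_subset)
  ultimately show ?thesis
    unfolding edges_across_def by (simp add: card_image card_cartesian_product)
qed

lemma cut_edges_eq_Int_edges_across: "cut_edges E S ({1..n} - S) = E \<inter> edges_across n S"
  unfolding cut_edges_def edges_across_def by auto

lemma cut_edges_complement:
  assumes "S \<subseteq> {1..n}"
  shows "cut_edges E ({1..n} - S) ({1..n} - ({1..n} - S)) = cut_edges E S ({1..n} - S)"
proof -
  have "{1..n} - ({1..n} - S) = S"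
    using assms by auto
  then show ?thesis
    unfolding cut_edges_def by (auto simp: insert_commute)
qed

lemma card_edges_within_le:
  assumes "S \<subseteq> {1..n}"
  shows "card (edges_within n S) \<le> card S ^ 2"
proof -
  have fin: "finite S"
    using assms finite_subset by blast
  have "card (edges_within n S) \<le> card ((\<lambda>(u, v). {u, v}) ` (S \<times> S))"
    using fin by (intro card_mono) (auto simp: edges_within_def all_edges_def)
  also have "\<dots> \<le> card (S \<times> S)"
    by (rule card_image_le) (use fin in auto)
  finally show ?thesis
    by (simp add: card_cartesian_product power2_eq_square)
qed

text \<open>Each edge leaving \<open>S\<close> is seen once from \<open>S\<close>, each edge inside \<open>S\<close> twice.\<close>

lemma sum_degree_le:
  assumes E: "E \<subseteq> all_edges n" and S: "S \<subseteq> {1..n}"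
  shows "(\<Sum>v\<in>S. degree E v)
    \<le> card (cut_edges E S ({1..n} - S)) + 2 * card (E \<inter> edges_within n S)"
proof -
  let ?N = "\<lambda>v. {u. {u, v} \<in> E}"
  let ?P = "SIGMA v:S. ?N v \<inter> ({1..n} - S)"
  let ?Q = "SIGMA v:S. ?N v \<inter> S"
  let ?edge = "\<lambda>(v, u). {u, v}"
  have fin: "finite S" "finite E"
    using finite_subset[OF S] finite_subset[OF E finite_all_edges] by auto
  have N: "?N v \<subseteq> {1..n} - {v}" for v
    using E doubleton_in_all_edges_iff by blast
  have "degree E v \<le> card (?N v \<inter> ({1..n} - S)) + card (?N v \<inter> S)" for v
  proof -
    have "?N v = (?N v \<inter> ({1..n} - S)) \<union> (?N v \<inter> S)"
      using N[of v] by auto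
    then show ?thesis
      unfolding degree_def by (metis card_Un_le)
  qed
  then have "(\<Sum>v\<in>S. degree E v) \<le> (\<Sum>v\<in>S. card (?N v \<inter> ({1..n} - S))) + (\<Sum>v\<in>S. card (?N v \<inter> S))"
    by (subst sum.distrib[symmetric]) (rule sum_mono)
  also have "\<dots> = card ?P + card ?Q"
    using fin by (simp add: card_SigmaI)
  also have "card ?P \<le> card (cut_edges E S ({1..n} - S))"
  proof (rule card_inj_on_le)
    show "inj_on ?edge ?P"
      by (rule inj_onI) (auto simp: doubleton_eq_iff)
    show "?edge ` ?P \<subseteq> cut_edges E S ({1..n} - S)"
      unfolding cut_edges_def by (auto simp: insert_commute)
    show "finite (cut_edges E S ({1..n} - S))"
      unfolding cut_edges_def using fin by auto
  qed
  also have "card ?Q \<le> 2 * card (E \<inter> edges_within n S)"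
  proof -
    let ?Q1 = "{x \<in> ?Q. fst x < snd x}" and ?Q2 = "{x \<in> ?Q. snd x < fst x}"
    have "{v} \<notin> E" for v
      using E by (auto simp: all_edges_def)
    then have cover: "?Q \<subseteq> ?Q1 \<union> ?Q2"
      by (auto simp: neq_iff) (metis insert_absorb2 linorder_neqE_nat)
    have "finite ?Q"
      using fin by auto
    have to_edge: "card Q' \<le> card (E \<inter> edges_within n S)"
      if "Q' \<subseteq> ?Q" "inj_on ?edge Q'" for Q'
    proof (rule card_inj_on_le[OF that(2)])
      show "?edge ` Q' \<subseteq> E \<inter> edges_within n S"
        using that(1) E unfolding edges_within_def by auto
    qed (use fin in auto)
    have "card ?Q \<le> card (?Q1 \<union> ?Q2)"
      using cover \<open>finite ?Q\<close> by (intro card_mono) auto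
    also have "\<dots> \<le> card ?Q1 + card ?Q2"
      by (rule card_Un_le)
    also have "card ?Q1 \<le> card (E \<inter> edges_within n S)"
      by (rule to_edge) (auto intro!: inj_onI simp: doubleton_eq_iff)
    also have "card ?Q2 \<le> card (E \<inter> edges_within n S)"
      by (rule to_edge) (auto intro!: inj_onI simp: doubleton_eq_iff)
    finally show ?thesis
      by simp
  qed
  finally show ?thesis
    by simp
qed

lemma min_degree_le: "v \<in> {1..n} \<Longrightarrow> min_degree n E \<le> degree E v"
  unfolding min_degree_def by (rule Min_le) auto

lemma ex_degree_eq_min_degree: "1 \<le> n \<Longrightarrow> \<exists>v\<in>{1..n}. degree E v = min_degree n E"
  unfolding min_degree_def by (metis Min_in atLeastAtMost_iff empty_iff finite_atLeastAtMost
      finite_imageI image_iff image_is_empty order_refl)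

lemma cut_ge_min_degree_if_sparse_within:
  assumes E: "E \<subseteq> all_edges n" and S: "S \<subseteq> {1..n}" "2 \<le> card S"
    and sparse: "real (card (E \<inter> edges_within n S)) \<le> real (card S) * real (min_degree n E) / 8"
  shows "1.5 * real (min_degree n E) \<le> real (card (cut_edges E S ({1..n} - S)))"
proof -
  let ?\<delta> = "real (min_degree n E)"
  have "real (card S) * ?\<delta> \<le> (\<Sum>v\<in>S. real (degree E v))"
    using sum_mono[of S "\<lambda>_. ?\<delta>" "\<lambda>v. real (degree E v)"] S(1) min_degree_le by force
  also have "\<dots> \<le> real (card (cut_edges E S ({1..n} - S))) + 2 * real (card (E \<inter> edges_within n S))"
    using sum_degree_le[OF E S(1)] by (simp flip: of_nat_sum of_nat_le_iff)
  finally have "real (card S) * ?\<delta> * 3 / 4 \<le> real (card (cut_edges E S ({1..n} - S)))"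
    using sparse by simp
  moreover have "2 * ?\<delta> \<le> real (card S) * ?\<delta>"
    using S(2) by (intro mult_right_mono) auto
  ultimately show ?thesis
    by simp
qed

definition large_cuts :: "nat \<Rightarrow> nat set set \<Rightarrow> bool" where
  "large_cuts n E \<longleftrightarrow> (\<forall>S. S \<subset> {1..n} \<and> 2 \<le> card S \<and> card S \<le> n - 2 \<longrightarrow>
     real (card (cut_edges E S ({1..n} - S))) \<ge> 1.5 * real (min_degree n E))"

section \<open>The exceptional events\<close>

definition low_degree_vertex :: "nat \<Rightarrow> real \<Rightarrow> nat set set \<Rightarrow> bool" where
  "low_degree_vertex n d E \<longleftrightarrow> (\<exists>v\<in>{1..n}. real (degree E v) \<le> d)"

definition dense_small_set :: "nat \<Rightarrow> real \<Rightarrow> real \<Rightarrow> nat set set \<Rightarrow> bool" where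
  "dense_small_set n s d E \<longleftrightarrow> (\<exists>S. S \<subseteq> {1..n} \<and> 2 \<le> card S \<and> real (card S) \<le> s \<and>
     real (card S) * d < real (card (E \<inter> edges_within n S)))"

definition sparse_middle_cut :: "nat \<Rightarrow> real \<Rightarrow> real \<Rightarrow> nat set set \<Rightarrow> bool" where
  "sparse_middle_cut n s m E \<longleftrightarrow> (\<exists>S. S \<subseteq> {1..n} \<and> s < real (card S) \<and> real (card S) < real n - s \<and>
     real (card (E \<inter> edges_across n S)) \<le> m)"

lemma large_cuts_unless_exceptional:
  fixes d h s m :: real
  assumes E: "E \<subseteq> all_edges n" and n: "1 \<le> n"
    and low: "\<not> low_degree_vertex n d E" and high: "real (degree E 1) \<le> h"
    and dense: "\<not> dense_small_set n s (d / 8) E" and sparse: "\<not> sparse_middle_cut n s m E"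
    and hm: "1.5 * h \<le> m"
  shows "large_cuts n E"
  unfolding large_cuts_def
proof (intro allI impI, elim conjE)
  fix S assume "S \<subset> {1..n}" and S2: "2 \<le> card S" and Sn: "card S \<le> n - 2"
  then have S: "S \<subseteq> {1..n}"
    by auto
  obtain v where v: "v \<in> {1..n}" "degree E v = min_degree n E"
    using ex_degree_eq_min_degree[OF n] by blast
  then have "\<not> real (degree E v) \<le> d"
    using low unfolding low_degree_vertex_def by blast
  with v(2) have d: "d \<le> real (min_degree n E)"
    by simp
  have "min_degree n E \<le> degree E 1"
    using n by (intro min_degree_le) auto
  with high have h: "real (min_degree n E) \<le> h"
    by linarith
  have small_cut: "1.5 * real (min_degree n E) \<le> real (card (cut_edges E T ({1..n} - T)))"
    if "T \<subseteq> {1..n}" "2 \<le> card T" "real (card T) \<le> s" for T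
  proof (rule cut_ge_min_degree_if_sparse_within[OF E that(1,2)])
    have "\<not> real (card T) * (d / 8) < real (card (E \<inter> edges_within n T))"
      using dense that unfolding dense_small_set_def by blast
    moreover have "real (card T) * d \<le> real (card T) * real (min_degree n E)"
      using d by (intro mult_left_mono) auto
    ultimately show "real (card (E \<inter> edges_within n T)) \<le> real (card T) * real (min_degree n E) / 8"
      by simp
  qed
  have card_compl: "card ({1..n} - S) = n - card S"
    using S by (simp add: card_Diff_subset finite_subset)
  consider "real (card S) \<le> s" | "real n - s \<le> real (card S)"
    | "s < real (card S)" "real (card S) < real n - s"
    by linarith
  then show "1.5 * real (min_degree n E) \<le> real (card (cut_edges E S ({1..n} - S)))"
  proof cases
    case 1
    then show ?thesis
      using small_cut[OF S S2] by simp
  next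
    case 2
    then have "real (card ({1..n} - S)) \<le> s"
      using card_compl Sn by (simp add: of_nat_diff)
    then show ?thesis
      using small_cut[of "{1..n} - S"] card_compl S2 Sn cut_edges_complement[OF S] by simp
  next
    case 3
    then have "m < real (card (E \<inter> edges_across n S))"
      using sparse S unfolding sparse_middle_cut_def by force
    then show ?thesis
      using h hm unfolding cut_edges_eq_Int_edges_across by linarith
  qed
qed

lemma of_nat_le_iff_le_nat_floor:
  fixes x :: real
  assumes "0 \<le> x"
  shows "real m \<le> x \<longleftrightarrow> m \<le> nat \<lfloor>x\<rfloor>"
  using assms by (simp add: le_nat_iff le_floor_iff)

lemma gnp_prob_card_gt_le:
  fixes p x a :: real
  assumes p: "0 \<le> p" "p \<le> 1" and F: "F \<subseteq> all_edges n" and x: "0 < x" and a: "0 \<le> a"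
    and ratio: "exp 1 * real (card F) * p / x \<le> exp (- a)"
  shows "gnp_prob n p (\<lambda>E. x < real (card (E \<inter> F))) \<le> exp (- a * x)"
proof -
  define t where "t = nat \<lfloor>x\<rfloor> + 1"
  have t: "x < real t" "1 \<le> t"
    using x by (auto simp: t_def) linarith
  have "gnp_prob n p (\<lambda>E. x < real (card (E \<inter> F))) = gnp_prob n p (\<lambda>E. t \<le> card (E \<inter> F))"
    using x by (intro gnp_prob_cong) (auto simp: t_def not_le[symmetric] of_nat_le_iff_le_nat_floor)
  also have "\<dots> \<le> real (card F choose t) * p ^ t"
    by (rule gnp_prob_card_ge_le[OF p F])
  also have "\<dots> \<le> (exp 1 * real (card F) * p / real t) ^ t"
    by (rule binomial_mult_power_le[OF p(1) t(2)])
  also have "\<dots> \<le> exp (- a) ^ t"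
  proof (rule power_mono)
    have "exp 1 * real (card F) * p / real t \<le> exp 1 * real (card F) * p / x"
      using t x p by (intro divide_left_mono) auto
    with ratio show "exp 1 * real (card F) * p / real t \<le> exp (- a)"
      by linarith
  qed (use p in simp)
  also have "\<dots> = exp (- a * real t)"
    by (simp add: exp_of_nat_mult[symmetric] ac_simps)
  also have "\<dots> \<le> exp (- a * x)"
    using t a by (simp add: mult_left_mono)
  finally show ?thesis .
qed

lemma gnp_prob_low_degree_le:
  fixes p \<epsilon> :: real and n :: nat
  assumes p: "0 \<le> p" "p \<le> 1" and \<epsilon>: "0 < \<epsilon>" "\<epsilon> \<le> 1"
  defines "D \<equiv> real (n - 1) * p"
  shows "gnp_prob n p (low_degree_vertex n (\<epsilon> * D))
    \<le> real n * ((D + 1) * exp (- D * (1 - \<epsilon> * (2 + ln (1 / \<epsilon>)))))"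
proof -
  let ?b = "(D + 1) * exp (- D * (1 - \<epsilon> * (2 + ln (1 / \<epsilon>))))"
  have "gnp_prob n p (\<lambda>E. real (degree E v) \<le> \<epsilon> * D) \<le> ?b" if v: "v \<in> {1..n}" for v
  proof -
    have "0 \<le> \<epsilon> * D"
      using \<epsilon> p by (simp add: D_def)
    then have "gnp_prob n p (\<lambda>E. real (degree E v) \<le> \<epsilon> * D)
        = gnp_prob n p (\<lambda>E. card (E \<inter> edges_at n v) \<le> nat \<lfloor>\<epsilon> * D\<rfloor>)"
      by (intro gnp_prob_cong) (simp add: degree_eq_card_edges_at of_nat_le_iff_le_nat_floor)
    also have "\<dots> = (\<Sum>j\<le>nat \<lfloor>\<epsilon> * D\<rfloor>. real ((n - 1) choose j) * p ^ j * (1 - p) ^ (n - 1 - j))"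
      using gnp_prob_card_le[OF edges_at_subset[OF v]] card_edges_at[OF v] by simp
    also have "\<dots> \<le> ?b"
      using binomial_lower_tail_le[OF p \<epsilon>, of "n - 1"] by (simp add: D_def)
    finally show ?thesis .
  qed
  then have "gnp_prob n p (low_degree_vertex n (\<epsilon> * D)) \<le> (\<Sum>v\<in>{1..n}. ?b)"
    unfolding low_degree_vertex_def[abs_def]
    by (intro order.trans[OF gnp_prob_Bex_le[OF p]] sum_mono) auto
  then show ?thesis
    by simp
qed

lemma gnp_prob_high_degree_le:
  fixes p :: real
  assumes n: "2 \<le> n" and p: "0 < p" "p \<le> 1"
  defines "D \<equiv> real (n - 1) * p"
  shows "gnp_prob n p (\<lambda>E. 9 * D < real (degree E 1)) \<le> exp (- 9 * D)"
proof -
  have v: "1 \<in> {1..n}"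
    using n by simp
  have D: "0 < D"
    using n p by (simp add: D_def)
  have "exp 1 * real (card (edges_at n 1)) * p / (9 * D) = exp 1 / 9"
    using n p unfolding card_edges_at[OF v] by (simp add: D_def)
  also have "\<dots> \<le> exp (- 1)"
  proof -
    have "exp 1 * exp 1 \<le> (3::real) * 3"
      using exp_le by (intro mult_mono) auto
    then show ?thesis
      by (simp add: exp_minus field_simps)
  qed
  finally have "exp 1 * real (card (edges_at n 1)) * p / (9 * D) \<le> exp (- 1)" .
  then have "gnp_prob n p (\<lambda>E. 9 * D < real (card (E \<inter> edges_at n 1))) \<le> exp (- 1 * (9 * D))"
    using p D by (intro gnp_prob_card_gt_le edges_at_subset[OF v]) auto
  moreover have "gnp_prob n p (\<lambda>E. 9 * D < real (degree E 1))
      = gnp_prob n p (\<lambda>E. 9 * D < real (card (E \<inter> edges_at n 1)))"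
    by (intro gnp_prob_cong) (simp add: degree_eq_card_edges_at)
  ultimately show ?thesis
    by simp
qed

text \<open>The exponent \<open>16 / (\<epsilon> \<gamma>)\<close> in the assumption on \<open>c\<close> makes the upper-tail bound
  \<open>n\<^sup>-\<^sup>2\<^sup>k\<close>, which beats the at most \<open>n\<^sup>k\<close> sets of size \<open>k\<close> in the union bound below.\<close>

lemma gnp_prob_dense_set_le:
  fixes p \<epsilon> \<gamma> c :: real and n :: nat
  assumes n: "2 \<le> n" and p: "0 < p" "p \<le> 1" and \<epsilon>: "0 < \<epsilon>" and \<gamma>: "0 < \<gamma>"
    and D: "\<gamma> * ln (real n) \<le> real (n - 1) * p"
    and c: "16 * exp 1 * c / \<epsilon> \<le> exp (- 16 / (\<epsilon> * \<gamma>))"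
    and S: "S \<subseteq> {1..n}" "1 \<le> card S" "real (card S) \<le> c * real n"
  shows "gnp_prob n p (\<lambda>E. real (card S) * (\<epsilon> * (real (n - 1) * p) / 8)
      < real (card (E \<inter> edges_within n S))) \<le> 1 / real n ^ (2 * card S)"
proof -
  define k where "k = real (card S)"
  define D where "D = real (n - 1) * p"
  define a where "a = 16 / (\<epsilon> * \<gamma>)"
  have n1: "1 \<le> real (n - 1)" "real n \<le> 2 * real (n - 1)"
    using n by (auto simp: of_nat_diff)
  have k: "1 \<le> k" "k \<le> c * real n"
    using S by (auto simp: k_def)
  have D0: "0 < D"
    using n1 p by (simp add: D_def)
  have "0 < c * real n"
    using k by linarith
  then have c0: "0 \<le> c"
    using n by (simp add: zero_less_mult_iff)
  have "exp 1 * real (card (edges_within n S)) * p / (k * (\<epsilon> * D) / 8) \<le> exp 1 * k\<^sup>2 * p / (k * (\<epsilon> * D) / 8)"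
    using card_edges_within_le[OF S(1)] p k \<epsilon> D0
    by (intro divide_right_mono mult_right_mono mult_left_mono) (auto simp: k_def simp flip: of_nat_power)
  also have "\<dots> = 8 * exp 1 * k / (\<epsilon> * real (n - 1))"
    using p \<epsilon> k by (simp add: D_def field_simps power2_eq_square)
  also have "\<dots> \<le> 8 * exp 1 * (c * (2 * real (n - 1))) / (\<epsilon> * real (n - 1))"
    using k n1 \<epsilon> c0 by (intro divide_right_mono mult_left_mono order.trans[OF k(2)]) auto
  also have "\<dots> = 16 * exp 1 * c / \<epsilon>"
    using n \<epsilon> by (simp add: divide_simps del: of_nat_diff)
  finally have "gnp_prob n p (\<lambda>E. k * (\<epsilon> * D) / 8 < real (card (E \<inter> edges_within n S)))
      \<le> exp (- a * (k * (\<epsilon> * D) / 8))"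
    using c p k \<epsilon> \<gamma> D0 by (intro gnp_prob_card_gt_le) (auto simp: a_def edges_within_def)
  also have "- a * (k * (\<epsilon> * D) / 8) = - (2 * k) * (D / \<gamma>)"
    using \<epsilon> \<gamma> by (simp add: a_def field_simps)
  also have "exp (- (2 * k) * (D / \<gamma>)) \<le> exp (- (2 * k) * ln (real n))"
    using D \<gamma> k by (simp add: D_def field_simps)
  also have "\<dots> = 1 / exp (real (2 * card S) * ln (real n))"
    by (simp add: k_def exp_minus inverse_eq_divide)
  also have "exp (real (2 * card S) * ln (real n)) = real n ^ (2 * card S)"
    using n by (subst exp_of_nat_mult) simp
  finally show ?thesis
    by (simp add: k_def D_def)
qed

lemma gnp_prob_dense_small_set_le:
  fixes p \<epsilon> \<gamma> c :: real and n :: nat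
  assumes n: "2 \<le> n" and p: "0 < p" "p \<le> 1" and \<epsilon>: "0 < \<epsilon>" and \<gamma>: "0 < \<gamma>"
    and D: "\<gamma> * ln (real n) \<le> real (n - 1) * p"
    and c: "16 * exp 1 * c / \<epsilon> \<le> exp (- 16 / (\<epsilon> * \<gamma>))"
  shows "gnp_prob n p (dense_small_set n (c * real n) (\<epsilon> * (real (n - 1) * p) / 8)) \<le> 1 / real n"
proof -
  let ?K = "{k \<in> {2..n}. real k \<le> c * real n}"
  let ?sets = "\<lambda>k. {S. S \<subseteq> {1..n} \<and> card S = k}"
  let ?dense = "\<lambda>S E. real (card S) * (\<epsilon> * (real (n - 1) * p) / 8) < real (card (E \<inter> edges_within n S))"
  have p01: "0 \<le> p" "p \<le> 1"
    using p by auto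
  have bound_k: "(\<Sum>S\<in>?sets k. gnp_prob n p (?dense S)) \<le> 1 / real n ^ 2" if k: "k \<in> ?K" for k
  proof -
    have "(\<Sum>S\<in>?sets k. gnp_prob n p (?dense S)) \<le> (\<Sum>S\<in>?sets k. 1 / real n ^ (2 * k))"
    proof (rule sum_mono)
      fix S assume "S \<in> ?sets k"
      then have S: "S \<subseteq> {1..n}" "1 \<le> card S" "real (card S) \<le> c * real n" "card S = k"
        using k by auto
      from gnp_prob_dense_set_le[OF n p \<epsilon> \<gamma> D c S(1-3)] S(4)
      show "gnp_prob n p (?dense S) \<le> 1 / real n ^ (2 * k)"
        by simp
    qed
    also have "\<dots> = real (n choose k) / real n ^ (2 * k)"
      using n_subsets[of "{1..n}" k] by simp
    also have "\<dots> \<le> real n ^ k / real n ^ (2 * k)"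
      using binomial_le_pow[of k n] k by (intro divide_right_mono) (auto simp flip: of_nat_power)
    also have "\<dots> = 1 / real n ^ k"
      using n by (simp add: power_mult power2_eq_square power_mult_distrib)
    also have "\<dots> \<le> 1 / real n ^ 2"
      using n k by (intro divide_left_mono power_increasing) auto
    finally show ?thesis .
  qed
  have "gnp_prob n p (dense_small_set n (c * real n) (\<epsilon> * (real (n - 1) * p) / 8))
      \<le> gnp_prob n p (\<lambda>E. \<exists>k\<in>?K. \<exists>S\<in>?sets k. ?dense S E)"
  proof (rule gnp_prob_mono[OF p01])
    fix E assume "dense_small_set n (c * real n) (\<epsilon> * (real (n - 1) * p) / 8) E"
    then obtain S where S: "S \<subseteq> {1..n}" "2 \<le> card S" "real (card S) \<le> c * real n" "?dense S E"
      unfolding dense_small_set_def by blast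
    then have "card S \<in> ?K" "S \<in> ?sets (card S)"
      using card_mono[OF _ S(1)] by auto
    with S(4) show "\<exists>k\<in>?K. \<exists>S\<in>?sets k. ?dense S E"
      by blast
  qed
  also have "\<dots> \<le> (\<Sum>k\<in>?K. \<Sum>S\<in>?sets k. gnp_prob n p (?dense S))"
    using p01 by (intro order.trans[OF gnp_prob_Bex_le] sum_mono gnp_prob_Bex_le) auto
  also have "\<dots> \<le> (\<Sum>k\<in>?K. 1 / real n ^ 2)"
    by (intro sum_mono bound_k)
  also have "\<dots> \<le> real n * (1 / real n ^ 2)"
  proof -
    have "card ?K \<le> card {1..n}"
      by (rule card_mono) auto
    then show ?thesis
      by (simp add: divide_right_mono)
  qed
  also have "\<dots> = 1 / real n"
    by (simp add: power2_eq_square)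
  finally show ?thesis .
qed

lemma half_mult_le_mult_diff:
  fixes a k m :: real
  assumes "0 \<le> a" "a < k" "k < m - a"
  shows "a * m / 2 \<le> k * (m - k)"
proof (cases "k \<le> m - k")
  case True
  then have "a * (m / 2) \<le> k * (m - k)"
    using assms by (intro mult_mono) auto
  then show ?thesis
    by simp
next
  case False
  then have "a * (m / 2) \<le> (m - k) * k"
    using assms by (intro mult_mono) auto
  then show ?thesis
    by (simp add: mult.commute)
qed

text \<open>Both sides have more than \<open>c n\<close> vertices, so the cut has at least \<open>c n\<^sup>2 / 2\<close> potential
  edges, and even the crude lower-tail bound makes \<open>O(D)\<close> edges have probability
  \<open>e\<^sup>-\<^sup>c\<^sup>n\<^sup>D\<^sup>/\<^sup>4\<close>, small enough for a union bound over all \<open>2\<^sup>n\<close> sets.\<close>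

lemma gnp_prob_sparse_cut_le:
  fixes p c :: real and n :: nat
  assumes n: "2 \<le> n" and p: "0 < p" "p \<le> 1" and c: "0 < c"
    and D1: "1 \<le> real (n - 1) * p" and n_large: "29 + 28 * ln (real n) \<le> c * real n / 4"
    and S: "S \<subseteq> {1..n}" "c * real n < real (card S)" "real (card S) < real n - c * real n"
  defines "D \<equiv> real (n - 1) * p"
  shows "gnp_prob n p (\<lambda>E. real (card (E \<inter> edges_across n S)) \<le> 14 * D) \<le> exp (- (c * real n * D / 4))"
proof -
  define s where "s = nat \<lfloor>14 * D\<rfloor>"
  define N where "N = card S * (n - card S)"
  have D: "1 \<le> D"
    using D1 unfolding D_def .
  have s: "real s \<le> 14 * D"
    using D by (simp add: s_def)
  have "0 < c * real n"
    using c n by simp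
  then have S_n: "card S < n"
    using S(3) by (simp flip: of_nat_less_iff)
  have N_eq: "real N = real (card S) * (real n - real (card S))"
    using S_n by (simp add: N_def of_nat_diff)
  have N_lower: "c * real n * real n / 2 \<le> real N"
    unfolding N_eq using c S by (intro half_mult_le_mult_diff) auto
  have N_upper: "real N \<le> real n ^ 2"
    unfolding N_eq using S_n by (simp add: power2_eq_square mult_mono)
  have "0 < card S"
    using S(2) \<open>0 < c * real n\<close> by linarith
  then have N1: "1 \<le> N"
    using S_n by (simp add: N_def)
  have "gnp_prob n p (\<lambda>E. real (card (E \<inter> edges_across n S)) \<le> 14 * D)
      = gnp_prob n p (\<lambda>E. card (E \<inter> edges_across n S) \<le> s)"
    using D by (intro gnp_prob_cong) (simp add: s_def of_nat_le_iff_le_nat_floor)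
  also have "\<dots> = (\<Sum>j\<le>s. real (N choose j) * p ^ j * (1 - p) ^ (N - j))"
    using gnp_prob_card_le[OF edges_across_subset[OF S(1)]] card_edges_across[OF S(1)]
    by (simp add: N_def)
  also have "\<dots> \<le> (real s + 1) * real N ^ s * exp (- p * real N + real s)"
    using p N1 by (intro binomial_lower_tail_le_crude) auto
  also have "\<dots> \<le> exp (15 * D) * exp (28 * D * ln (real n)) * exp (- (c * real n * D / 2) + 14 * D)"
  proof (intro mult_mono)
    show "real s + 1 \<le> exp (15 * D)"
      using s D exp_ge_add_one_self[of "15 * D"] by linarith
    have "real N ^ s \<le> (real n ^ 2) ^ s"
      using N_upper by (intro power_mono) auto
    also have "\<dots> = exp (real s * (2 * ln (real n)))"
      using n by (simp add: exp_of_nat_mult exp_double)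
    also have "\<dots> \<le> exp (28 * D * ln (real n))"
      using s n by (simp add: mult_right_mono)
    finally show "real N ^ s \<le> exp (28 * D * ln (real n))" .
    have "c * real n * D / 2 \<le> p * (c * real n * real n / 2)"
      using c p by (simp add: D_def mult_left_mono mult_right_mono ac_simps)
    also have "\<dots> \<le> p * real N"
      using N_lower p by (intro mult_left_mono) auto
    finally show "exp (- p * real N + real s) \<le> exp (- (c * real n * D / 2) + 14 * D)"
      using s by simp
  qed auto
  also have "\<dots> = exp (D * (29 + 28 * ln (real n)) - c * real n * D / 2)"
    by (simp add: exp_add[symmetric] algebra_simps)
  also have "\<dots> \<le> exp (- (c * real n * D / 4))"
    using mult_left_mono[OF n_large, of D] D by (simp add: algebra_simps)
  finally show ?thesis .
qed

lemma gnp_prob_sparse_middle_cut_le: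
  fixes p c :: real and n :: nat
  assumes n: "2 \<le> n" and p: "0 < p" "p \<le> 1" and c: "0 < c"
    and D1: "1 \<le> real (n - 1) * p" and D8: "8 / c \<le> real (n - 1) * p"
    and n_large: "29 + 28 * ln (real n) \<le> c * real n / 4"
  shows "gnp_prob n p (sparse_middle_cut n (c * real n) (14 * (real (n - 1) * p))) \<le> 1 / real n"
proof -
  define D where "D = real (n - 1) * p"
  let ?I = "{S \<in> Pow {1..n}. c * real n < real (card S) \<and> real (card S) < real n - c * real n}"
  have p01: "0 \<le> p" "p \<le> 1"
    using p by auto
  have "gnp_prob n p (sparse_middle_cut n (c * real n) (14 * D))
    = gnp_prob n p (\<lambda>E. \<exists>S\<in>?I. real (card (E \<inter> edges_across n S)) \<le> 14 * D)"
    unfolding sparse_middle_cut_def by (intro gnp_prob_cong) auto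
  also have "\<dots> \<le> (\<Sum>S\<in>?I. gnp_prob n p (\<lambda>E. real (card (E \<inter> edges_across n S)) \<le> 14 * D))"
    using p01 by (intro gnp_prob_Bex_le) auto
  also have "\<dots> \<le> (\<Sum>S\<in>?I. exp (- (c * real n * D / 4)))"
    using gnp_prob_sparse_cut_le[OF n p c D1 n_large] by (intro sum_mono) (auto simp: D_def)
  also have "\<dots> \<le> 2 ^ n * exp (- (c * real n * D / 4))"
  proof -
    have "card ?I \<le> card (Pow {1..n})"
      by (intro card_mono) auto
    then have "real (card ?I) \<le> 2 ^ n"
      by (simp add: card_Pow flip: of_nat_le_iff)
    then show ?thesis
      by (simp add: mult_right_mono)
  qed
  also have "\<dots> \<le> exp (real n) * exp (- (2 * real n))"
  proof (intro mult_mono)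
    have "(2::real) ^ n \<le> exp 1 ^ n"
      using exp_ge_add_one_self[of 1] by (intro power_mono) auto
    then show "(2::real) ^ n \<le> exp (real n)"
      by (simp add: exp_of_nat_mult[symmetric])
    have "8 / c \<le> D"
      using D8 unfolding D_def .
    then have "8 \<le> c * D"
      using c by (simp add: pos_divide_le_eq mult.commute)
    then show "exp (- (c * real n * D / 4)) \<le> exp (- (2 * real n))"
      using mult_right_mono[OF \<open>8 \<le> c * D\<close>, of "real n"] by (simp add: algebra_simps)
  qed auto
  also have "\<dots> = 1 / exp (real n)"
    by (simp add: exp_minus exp_add[symmetric] field_simps)
  also have "\<dots> \<le> 1 / real n"
  proof (rule divide_left_mono)
    show "real n \<le> exp (real n)"
      using exp_ge_add_one_self[of "real n"] by linarith
  qed (use n in auto)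
  finally show ?thesis
    by (simp add: D_def)
qed

text \<open>The factor \<open>e\<^sup>-\<^sup>\<beta>\<^sup>D\<close> absorbs \<open>D + 1\<close>, and \<open>D \<ge> \<gamma> ln x\<close> turns the remaining
  \<open>e\<^sup>-\<^sup>(\<^sup>1\<^sup>-\<^sup>\<eta>\<^sup>-\<^sup>\<beta>\<^sup>)\<^sup>D\<close> into \<open>x\<^sup>-\<^sup>(\<^sup>1\<^sup>+\<^sup>\<theta>\<^sup>)\<close>.\<close>

lemma mult_exp_tail_le_powr:
  fixes x D \<eta> \<beta> \<theta> \<gamma> :: real
  assumes x: "1 \<le> x" and D: "0 \<le> D" "\<gamma> * ln x \<le> D" and \<beta>: "0 < \<beta>" "\<beta> \<le> 1"
    and \<theta>: "0 \<le> \<theta>" and \<gamma>: "0 < \<gamma>" and margin: "1 + \<theta> \<le> \<gamma> * (1 - \<eta> - \<beta>)"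
  shows "x * ((D + 1) * exp (- D * (1 - \<eta>))) \<le> x powr (- \<theta>) / \<beta>"
proof -
  have rest: "0 \<le> 1 - \<eta> - \<beta>"
    using margin \<theta> \<gamma> by (smt (verit) mult_pos_neg)
  have "(D + 1) * exp (- \<beta> * D) \<le> 1 / \<beta>"
  proof -
    have "\<beta> * (D + 1) \<le> 1 + \<beta> * D"
      using \<beta> by (simp add: algebra_simps)
    then have "\<beta> * (D + 1) \<le> exp (\<beta> * D)"
      using exp_ge_add_one_self[of "\<beta> * D"] by linarith
    then show ?thesis
      using \<beta> by (simp add: exp_minus field_simps)
  qed
  moreover have "exp (- D * (1 - \<eta> - \<beta>)) \<le> exp (- (1 + \<theta>) * ln x)"
  proof -
    have "(1 + \<theta>) * ln x \<le> \<gamma> * (1 - \<eta> - \<beta>) * ln x"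
      using margin x by (intro mult_right_mono) auto
    also have "\<dots> = (\<gamma> * ln x) * (1 - \<eta> - \<beta>)"
      by (simp add: ac_simps)
    also have "\<dots> \<le> D * (1 - \<eta> - \<beta>)"
      using D rest by (intro mult_right_mono) auto
    finally show ?thesis
      by (simp add: algebra_simps)
  qed
  ultimately have "((D + 1) * exp (- \<beta> * D)) * exp (- D * (1 - \<eta> - \<beta>))
      \<le> 1 / \<beta> * exp (- (1 + \<theta>) * ln x)"
    using \<beta> by (intro mult_mono) auto
  also have "((D + 1) * exp (- \<beta> * D)) * exp (- D * (1 - \<eta> - \<beta>)) = (D + 1) * exp (- D * (1 - \<eta>))"
    unfolding mult.assoc exp_add[symmetric] by (simp add: algebra_simps)
  finally have "(D + 1) * exp (- D * (1 - \<eta>)) \<le> 1 / \<beta> * exp (- (1 + \<theta>) * ln x)" .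
  then have "x * ((D + 1) * exp (- D * (1 - \<eta>))) \<le> x * (1 / \<beta> * exp (- (1 + \<theta>) * ln x))"
    using x by (intro mult_left_mono) auto
  also have "\<dots> = 1 / \<beta> * (exp (ln x) * exp (- (1 + \<theta>) * ln x))"
    using x by simp
  also have "\<dots> = x powr (- \<theta>) / \<beta>"
    using x unfolding exp_add[symmetric] by (simp add: powr_def algebra_simps)
  finally show ?thesis .
qed

lemma gnp_prob_not_large_cuts_le:
  fixes \<gamma> \<epsilon> \<beta> \<theta> c p :: real and n :: nat
  defines "D \<equiv> real (n - 1) * p"
  assumes \<gamma>: "0 < \<gamma>" and \<epsilon>: "0 < \<epsilon>" "\<epsilon> \<le> 1" and \<beta>: "0 < \<beta>" "\<beta> \<le> 1" and \<theta>: "0 \<le> \<theta>"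
    and margin: "1 + \<theta> \<le> \<gamma> * (1 - \<epsilon> * (2 + ln (1 / \<epsilon>)) - \<beta>)"
    and c: "0 < c" "16 * exp 1 * c / \<epsilon> \<le> exp (- 16 / (\<epsilon> * \<gamma>))"
    and n: "2 \<le> n" "29 + 28 * ln (real n) \<le> c * real n / 4" and p: "0 < p" "p \<le> 1"
    and D: "\<gamma> * ln (real n) \<le> D" "ln (real n) \<le> D" "1 \<le> D" "8 / c \<le> D"
  shows "gnp_prob n p (\<lambda>E. \<not> large_cuts n E) \<le> real n powr (- \<theta>) / \<beta> + 3 / real n"
proof -
  let ?low = "low_degree_vertex n (\<epsilon> * D)"
  let ?high = "\<lambda>E. 9 * D < real (degree E 1)"
  let ?dense = "dense_small_set n (c * real n) (\<epsilon> * D / 8)"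
  let ?sparse = "sparse_middle_cut n (c * real n) (14 * D)"
  have p01: "0 \<le> p" "p \<le> 1"
    using p by auto
  have "gnp_prob n p ?low \<le> real n * ((D + 1) * exp (- D * (1 - \<epsilon> * (2 + ln (1 / \<epsilon>)))))"
    unfolding D_def using p01 \<epsilon> by (rule gnp_prob_low_degree_le)
  also have "\<dots> \<le> real n powr (- \<theta>) / \<beta>"
    using n D \<beta> \<theta> \<gamma> margin by (intro mult_exp_tail_le_powr) (auto simp: D_def)
  finally have low: "gnp_prob n p ?low \<le> real n powr (- \<theta>) / \<beta>" .
  have "gnp_prob n p ?high \<le> exp (- 9 * D)"
    unfolding D_def using n(1) p by (rule gnp_prob_high_degree_le)
  also have "\<dots> \<le> exp (- ln (real n))"
    using D by simp
  finally have high: "gnp_prob n p ?high \<le> 1 / real n"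
    using n by (simp add: exp_minus inverse_eq_divide)
  have dense: "gnp_prob n p ?dense \<le> 1 / real n"
    unfolding D_def using n p \<epsilon> \<gamma> D(1) c(2) by (intro gnp_prob_dense_small_set_le) (auto simp: D_def)
  have sparse: "gnp_prob n p ?sparse \<le> 1 / real n"
    unfolding D_def using n p c D by (intro gnp_prob_sparse_middle_cut_le) (auto simp: D_def)
  have "gnp_prob n p (\<lambda>E. \<not> large_cuts n E) \<le> gnp_prob n p (\<lambda>E. ?low E \<or> ?high E \<or> ?dense E \<or> ?sparse E)"
  proof (rule gnp_prob_mono[OF p01])
    fix E assume "E \<subseteq> all_edges n" "\<not> large_cuts n E"
    then show "?low E \<or> ?high E \<or> ?dense E \<or> ?sparse E"
      using large_cuts_unless_exceptional[of E n "\<epsilon> * D" "9 * D" "c * real n" "14 * D"] n by fastforce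
  qed
  also have "\<dots> \<le> gnp_prob n p ?low + gnp_prob n p (\<lambda>E. ?high E \<or> ?dense E \<or> ?sparse E)"
    using p01 by (rule gnp_prob_disj_le)
  also have "gnp_prob n p (\<lambda>E. ?high E \<or> ?dense E \<or> ?sparse E)
      \<le> gnp_prob n p ?high + gnp_prob n p (\<lambda>E. ?dense E \<or> ?sparse E)"
    using p01 by (rule gnp_prob_disj_le)
  also have "gnp_prob n p (\<lambda>E. ?dense E \<or> ?sparse E) \<le> gnp_prob n p ?dense + gnp_prob n p ?sparse"
    using p01 by (rule gnp_prob_disj_le)
  finally show ?thesis
    using low high dense sparse by simp
qed

lemma gnp_prob_large_cuts_ge:
  fixes \<gamma> \<epsilon> \<beta> \<theta> c p :: real and n :: nat
  assumes \<gamma>: "1 \<le> \<gamma>" and \<epsilon>: "0 < \<epsilon>" "\<epsilon> \<le> 1" and \<beta>: "0 < \<beta>" "\<beta> \<le> 1" and \<theta>: "0 \<le> \<theta>" "\<theta> \<le> 1"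
    and margin: "1 + \<theta> \<le> \<gamma> * (1 - \<epsilon> * (2 + ln (1 / \<epsilon>)) - \<beta>)"
    and c: "0 < c" "16 * exp 1 * c / \<epsilon> \<le> exp (- 16 / (\<epsilon> * \<gamma>))"
    and n: "2 \<le> n" "1 \<le> ln (real n)" "8 / c \<le> ln (real n)" "29 + 28 * ln (real n) \<le> c * real n / 4"
    and p: "\<gamma> * ln (real n) / (real n - 1) \<le> p" "p \<le> 1"
  shows "1 - (1 / \<beta> + 3) * real n powr (- \<theta>) \<le> gnp_prob n p (large_cuts n)"
proof -
  define D where "D = real (n - 1) * p"
  have "0 < real n - 1"
    using n by simp
  then have D_ge: "\<gamma> * ln (real n) \<le> D"
    using p n by (simp add: D_def of_nat_diff pos_divide_le_eq mult.commute)
  moreover have "ln (real n) \<le> \<gamma> * ln (real n)"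
    using \<gamma> n by simp
  ultimately have D_ln: "ln (real n) \<le> D" "1 \<le> D" "8 / c \<le> D"
    using n by linarith+
  have "0 < real (n - 1) * p"
    using D_ln(2) unfolding D_def by linarith
  then have "0 < p"
    by (simp add: zero_less_mult_iff)
  then have "gnp_prob n p (\<lambda>E. \<not> large_cuts n E) \<le> real n powr (- \<theta>) / \<beta> + 3 / real n"
    using \<gamma> \<epsilon> \<beta> \<theta> margin c n p D_ge D_ln unfolding D_def
    by (intro gnp_prob_not_large_cuts_le) auto
  moreover have "1 / real n \<le> real n powr (- \<theta>)"
    using n \<theta> powr_mono[of "- 1" "- \<theta>" "real n"] by (simp add: powr_minus_divide)
  ultimately show ?thesis
    using gnp_prob_not[of n p "large_cuts n"] by (simp add: algebra_simps)
qed

lemma square_two_plus_ln_inverse_le: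
  fixes u :: real
  assumes u: "0 < u" "u \<le> 1"
  shows "u\<^sup>2 * (2 + ln (1 / u\<^sup>2)) \<le> 4 * u"
proof -
  have "ln (1 / u\<^sup>2) = 2 * ln (1 / u)"
    using u by (simp add: ln_div ln_realpow)
  also have "ln (1 / u) \<le> 1 / u - 1"
    using u by (intro ln_le_minus_one) auto
  finally have "u\<^sup>2 * (2 + ln (1 / u\<^sup>2)) \<le> u\<^sup>2 * (2 + 2 / u)"
    using u by (intro mult_left_mono) (auto simp: field_simps)
  also have "\<dots> = 2 * u\<^sup>2 + 2 * u"
    using u by (simp add: field_simps power2_eq_square)
  also have "\<dots> \<le> 4 * u"
    using u by (simp add: power2_eq_square mult_left_le_one_le)
  finally show ?thesis .
qed

lemma large_cuts_parameters:
  fixes \<gamma> :: real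
  assumes \<gamma>: "1 < \<gamma>"
  obtains \<epsilon> \<beta> \<theta> c where "0 < \<epsilon>" "\<epsilon> \<le> 1" "0 < \<beta>" "\<beta> \<le> 1" "0 < \<theta>" "\<theta> \<le> 1"
    "1 + \<theta> \<le> \<gamma> * (1 - \<epsilon> * (2 + ln (1 / \<epsilon>)) - \<beta>)"
    "0 < c" "16 * exp 1 * c / \<epsilon> \<le> exp (- 16 / (\<epsilon> * \<gamma>))"
proof -
  define \<eta> where "\<eta> = (\<gamma> - 1) / (2 * \<gamma>)"
  define \<epsilon> where "\<epsilon> = (\<eta> / 4)\<^sup>2"
  define \<beta> where "\<beta> = (\<gamma> - 1) / (4 * \<gamma>)"
  define c where "c = \<epsilon> * exp (- 16 / (\<epsilon> * \<gamma>)) / (16 * exp 1)"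
  have \<eta>: "0 < \<eta>" "\<eta> \<le> 1"
    using \<gamma> by (auto simp: \<eta>_def field_simps)
  then have \<epsilon>: "0 < \<epsilon>" "\<epsilon> \<le> 1"
    by (auto simp: \<epsilon>_def power_le_one)
  have "\<epsilon> * (2 + ln (1 / \<epsilon>)) \<le> \<eta>"
    using square_two_plus_ln_inverse_le[of "\<eta> / 4"] \<eta> by (simp add: \<epsilon>_def)
  then have "\<gamma> * (1 - \<eta> - \<beta>) \<le> \<gamma> * (1 - \<epsilon> * (2 + ln (1 / \<epsilon>)) - \<beta>)"
    using \<gamma> by (intro mult_left_mono) auto
  moreover have "\<gamma> * (1 - \<eta> - \<beta>) = 1 + (\<gamma> - 1) / 4"
    using \<gamma> by (simp add: \<eta>_def \<beta>_def field_simps)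
  ultimately have "1 + min ((\<gamma> - 1) / 4) 1 \<le> \<gamma> * (1 - \<epsilon> * (2 + ln (1 / \<epsilon>)) - \<beta>)"
    by linarith
  moreover have "0 < \<beta>" "\<beta> \<le> 1" "0 < min ((\<gamma> - 1) / 4) 1"
    using \<gamma> by (auto simp: \<beta>_def field_simps)
  moreover have "0 < c" "16 * exp 1 * c / \<epsilon> \<le> exp (- 16 / (\<epsilon> * \<gamma>))"
    using \<epsilon> by (auto simp: c_def)
  ultimately show thesis
    using \<epsilon> by (intro that) auto
qed

theorem lemma4p15:
  fixes \<gamma> :: real
  assumes "\<gamma> > 1"
  shows "\<exists>C > 0. \<exists>N. \<forall>n \<ge> N. \<forall>p :: real.
           \<gamma> * ln (real n) / (real n - 1) \<le> p \<and> p \<le> 1 \<longrightarrow>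
           gnp_prob n p (\<lambda>E. \<forall>S. S \<subset> {1..n} \<and> 2 \<le> card S \<and> card S \<le> n - 2 \<longrightarrow>
              real (card (cut_edges E S ({1..n} - S))) \<ge> 1.5 * real (min_degree n E))
           \<ge> 1 - real n powr (- C)"
proof -
  obtain \<epsilon> \<beta> \<theta> c where params: "0 < \<epsilon>" "\<epsilon> \<le> 1" "0 < \<beta>" "\<beta> \<le> 1" "0 < \<theta>" "\<theta> \<le> 1"
      "1 + \<theta> \<le> \<gamma> * (1 - \<epsilon> * (2 + ln (1 / \<epsilon>)) - \<beta>)"
      "0 < c" "16 * exp 1 * c / \<epsilon> \<le> exp (- 16 / (\<epsilon> * \<gamma>))"
    using large_cuts_parameters[OF assms] by blast
  have "\<forall>\<^sub>F n in sequentially. 2 \<le> n \<and> 1 \<le> ln (real n) \<and> 8 / c \<le> ln (real n) \<and>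
      29 + 28 * ln (real n) \<le> c * real n / 4 \<and>
      (1 / \<beta> + 3) * real n powr (- \<theta>) \<le> real n powr (- (\<theta> / 2))"
    using params by (intro eventually_conj eventually_ge_at_top; real_asymp)
  then obtain N where N: "\<And>n. N \<le> n \<Longrightarrow> 2 \<le> n \<and> 1 \<le> ln (real n) \<and> 8 / c \<le> ln (real n) \<and>
      29 + 28 * ln (real n) \<le> c * real n / 4 \<and>
      (1 / \<beta> + 3) * real n powr (- \<theta>) \<le> real n powr (- (\<theta> / 2))"
    unfolding eventually_sequentially by blast
  have "1 - real n powr (- (\<theta> / 2)) \<le> gnp_prob n p (large_cuts n)"
    if "N \<le> n" "\<gamma> * ln (real n) / (real n - 1) \<le> p" "p \<le> 1" for n p
  proof -
    have "1 - (1 / \<beta> + 3) * real n powr (- \<theta>) \<le> gnp_prob n p (large_cuts n)"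
      using assms params N[OF that(1)] that(2,3) by (intro gnp_prob_large_cuts_ge) auto
    with N[OF that(1)] show ?thesis
      by linarith
  qed
  then show ?thesis
    using params(5) unfolding large_cuts_def[abs_def]
    by (intro exI[of _ "\<theta> / 2"] conjI exI[of _ N]) auto
qed

end
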